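(* Let $1\le p\le\infty$, let $m\ge1$, and let $L:(\ell_p)^m\to\mathbb{R}$ be a continuous symmetric $m$-linear form on real $\ell_p$ with associated homogeneous polynomial $\widehat L$. Let $x_1,\ldots,x_n$ be norm-one vectors in $\ell_p$ with pairwise disjoint supports and let $k_1,\ldots,k_n$ be non-negative integers with $k_1+\cdots+k_n=m$. Then \[\frac{|L(x_1^{k_1}\cdots x_n^{k_n})|}{\|\widehat L\|}\le \begin{cases} \min\left\{\dfrac{k_1^{k_1}\cdots k_n^{k_n}}{m!}\,n^{m/p},\ \dfrac{p\,2^{p/2}\,\Gamma(p/2)\,m^{p/2}}{m!}\right\}, & \text{if } p\ge m,\\[3mm] \min\left\{\dfrac{k_1^{k_1}\cdots k_n^{k_n}}{m!}\,n^{m/p},\ \dfrac{n^{(m-p)/p}\,m\,2^{m/2}\,\Gamma(m/2)\,m^{m/2}}{m!}\right\}, & \text{if } p< m. \end{cases}\]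
   Context: $\widehat{L}(x)=L(x,\ldots,x)$, $\|\widehat{L}\|=\sup\{|\widehat{L}(x)|:\|x\|_p\le1\}$; $L(x_1^{k_1}\cdots x_n^{k_n})$ means $L$ evaluated at the $m$-tuple in which each $x_i$ appears $k_i$ times. The support of $x=(x(j))_j\in\ell_p$ is $\{j:x(j)\neq0\}$. Conventions: $0^0=1$; $n^{m/p}=1$ when $p=\infty$; for $p=\infty$ the second term in the minimum is interpreted as $+\infty$. *)

theory Defs
  imports "HOL-Analysis.Analysis" "HOL-Library.Multiset"
begin

definition in_lp :: "ereal \<Rightarrow> (nat \<Rightarrow> real) \<Rightarrow> bool" where
  "in_lp p x = (if p = \<infinity> then bdd_above (range (\<lambda>j. \<bar>x j\<bar>))
                else summable (\<lambda>j. \<bar>x j\<bar> powr real_of_ereal p))"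

definition lp_norm :: "ereal \<Rightarrow> (nat \<Rightarrow> real) \<Rightarrow> real" where
  "lp_norm p x = (if p = \<infinity> then (SUP j. \<bar>x j\<bar>)
                  else (\<Sum>j. \<bar>x j\<bar> powr real_of_ereal p) powr (1 / real_of_ereal p))"

definition supp :: "(nat \<Rightarrow> real) \<Rightarrow> nat set" where
  "supp x = {j. x j \<noteq> 0}"

text \<open>An m-linear form is modelled as a function on lists of length m of ell_p vectors.\<close>

definition multilinear_lp :: "ereal \<Rightarrow> nat \<Rightarrow> ((nat \<Rightarrow> real) list \<Rightarrow> real) \<Rightarrow> bool" where
  "multilinear_lp p m L = (\<forall>xs i u v (a::real) (b::real).
     length xs = m \<and> (\<forall>y\<in>set xs. in_lp p y) \<and> i < m \<and> in_lp p u \<and> in_lp p v \<longrightarrow>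
     L (xs[i := (\<lambda>j. a * u j + b * v j)]) = a * L (xs[i := u]) + b * L (xs[i := v]))"

definition symmetric_lp :: "ereal \<Rightarrow> nat \<Rightarrow> ((nat \<Rightarrow> real) list \<Rightarrow> real) \<Rightarrow> bool" where
  "symmetric_lp p m L = (\<forall>xs ys. length xs = m \<and> (\<forall>y\<in>set xs. in_lp p y) \<and>
     mset xs = mset ys \<longrightarrow> L xs = L ys)"

definition continuous_lp :: "ereal \<Rightarrow> nat \<Rightarrow> ((nat \<Rightarrow> real) list \<Rightarrow> real) \<Rightarrow> bool" where
  "continuous_lp p m L = (\<forall>xs. length xs = m \<and> (\<forall>y\<in>set xs. in_lp p y) \<longrightarrow>
     (\<forall>e>0. \<exists>d>0. \<forall>ys. length ys = m \<and> (\<forall>y\<in>set ys. in_lp p y) \<and>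
        (\<forall>i<m. lp_norm p (\<lambda>j. (ys ! i) j - (xs ! i) j) < d) \<longrightarrow> \<bar>L ys - L xs\<bar> < e))"

definition poly_hat :: "nat \<Rightarrow> ((nat \<Rightarrow> real) list \<Rightarrow> real) \<Rightarrow> (nat \<Rightarrow> real) \<Rightarrow> real" where
  "poly_hat m L x = L (replicate m x)"

definition poly_norm :: "ereal \<Rightarrow> nat \<Rightarrow> ((nat \<Rightarrow> real) list \<Rightarrow> real) \<Rightarrow> real" where
  "poly_norm p m L = Sup {\<bar>poly_hat m L x\<bar> | x. in_lp p x \<and> lp_norm p x \<le> 1}"

definition power_tuple :: "nat \<Rightarrow> (nat \<Rightarrow> nat \<Rightarrow> real) \<Rightarrow> (nat \<Rightarrow> nat) \<Rightarrow> (nat \<Rightarrow> real) list" where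
  "power_tuple n x k = concat (map (\<lambda>i. replicate (k i) (x i)) [0..<n])"

definition thm5_bound :: "ereal \<Rightarrow> nat \<Rightarrow> nat \<Rightarrow> (nat \<Rightarrow> nat) \<Rightarrow> real" where
  "thm5_bound p m n k =
    (let first = real (\<Prod>i<n. k i ^ k i) / fact m *
                 (if p = \<infinity> then 1 else real n powr (real m / real_of_ereal p));
         q = real_of_ereal p
     in if p = \<infinity> then first
        else if q \<ge> real m then
          min first (q * 2 powr (q/2) * Gamma (q/2) * real m powr (q/2) / fact m)
        else
          min first (real n powr ((real m - q) / q) * real m * 2 powr (real m / 2)
                     * Gamma (real m / 2) * real m powr (real m / 2) / fact m))"

end

theory Submission
  imports Defs "HOL-Probability.Hoeffding"
begin

(* Write b for the index list in which i occurs k_i times and B_i for the set of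
   positions of i in b, so L(x_1^k_1 ... x_n^k_n) = L(x_b(1), ..., x_b(m)).
   The polarization formula with random signs e in {-1,1}^m gives, for any weights g,
     2^m m! (prod_i g_i^k_i) L(x_b) = sum_e (prod_j e_j) L_hat(sum_i g_i S_i(e) x_i),
   with S_i(e) = sum over B_i of e_j, hence
     2^m m! |prod_i g_i^k_i| |L(x_b)| <= |L_hat| sum_e |sum_i g_i S_i(e) x_i|_p^m.
   Disjointness makes the l_p norm on the right the l_p norm of the coefficient vector.
   (1) With g_i = 1/k_i all coefficients lie in [-1,1]; this gives the bound
       k_1^k_1 ... k_n^k_n n^(m/p) / m!.
   (2) With g_i = 1 the right side is a sign-average of moments of Rademacher sums,
       bounded by Khintchine-type estimates (a Chernoff argument together with
       x^x e^-x <= Gamma(x+1)) and power-mean inequalities; this gives the second bound. *)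

lemma finite_exponent_ge_1:
  assumes "1 \<le> p" "p \<noteq> \<infinity>"
  shows "real_of_ereal p \<ge> 1"
  using assms by (cases p) auto

lemma in_lp_zero: "in_lp p (\<lambda>_. 0)"
  by (auto simp: in_lp_def)

lemma abs_lincomb_powr_le:
  fixes a b u v q :: real
  assumes q: "q \<ge> 0"
  shows "\<bar>a * u + b * v\<bar> powr q \<le> (2 * max \<bar>a\<bar> \<bar>b\<bar>) powr q * (\<bar>u\<bar> powr q + \<bar>v\<bar> powr q)"
proof -
  define M where "M = 2 * max \<bar>a\<bar> \<bar>b\<bar>"
  have "\<bar>a\<bar> * \<bar>u\<bar> \<le> max \<bar>a\<bar> \<bar>b\<bar> * max \<bar>u\<bar> \<bar>v\<bar>" "\<bar>b\<bar> * \<bar>v\<bar> \<le> max \<bar>a\<bar> \<bar>b\<bar> * max \<bar>u\<bar> \<bar>v\<bar>"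
    by (intro mult_mono; simp)+
  moreover have "\<bar>a * u + b * v\<bar> \<le> \<bar>a\<bar> * \<bar>u\<bar> + \<bar>b\<bar> * \<bar>v\<bar>"
    by (metis abs_mult abs_triangle_ineq)
  ultimately have "\<bar>a * u + b * v\<bar> \<le> M * max \<bar>u\<bar> \<bar>v\<bar>" unfolding M_def by linarith
  hence "\<bar>a * u + b * v\<bar> powr q \<le> (M * max \<bar>u\<bar> \<bar>v\<bar>) powr q"
    using q by (intro powr_mono2) auto
  also have "\<dots> = M powr q * (max \<bar>u\<bar> \<bar>v\<bar>) powr q"
    by (simp add: M_def powr_mult)
  also have "\<dots> \<le> M powr q * (\<bar>u\<bar> powr q + \<bar>v\<bar> powr q)"
    by (intro mult_left_mono) (auto simp: max_def)
  finally show ?thesis by (simp add: M_def)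
qed

lemma in_lp_lincomb:
  assumes p: "1 \<le> p" and u: "in_lp p u" and v: "in_lp p v"
  shows "in_lp p (\<lambda>j. a * u j + b * v j)"
proof (cases "p = \<infinity>")
  case True
  from u v True obtain U V where U: "\<And>j. \<bar>u j\<bar> \<le> U" and V: "\<And>j. \<bar>v j\<bar> \<le> V"
    by (auto simp: in_lp_def bdd_above_def)
  have "\<bar>a * u j + b * v j\<bar> \<le> \<bar>a\<bar> * U + \<bar>b\<bar> * V" for j
  proof -
    have "\<bar>a * u j + b * v j\<bar> \<le> \<bar>a\<bar> * \<bar>u j\<bar> + \<bar>b\<bar> * \<bar>v j\<bar>"
      by (metis abs_mult abs_triangle_ineq)
    also have "\<dots> \<le> \<bar>a\<bar> * U + \<bar>b\<bar> * V"
      by (intro add_mono mult_left_mono U V) auto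
    finally show ?thesis .
  qed
  thus ?thesis using True by (auto simp: in_lp_def bdd_above_def)
next
  case False
  define q where "q = real_of_ereal p"
  have su: "summable (\<lambda>j. \<bar>u j\<bar> powr q)" and sv: "summable (\<lambda>j. \<bar>v j\<bar> powr q)"
    using u v False by (auto simp: in_lp_def q_def)
  have "q \<ge> 0" using finite_exponent_ge_1[OF p False] by (simp add: q_def)
  hence "summable (\<lambda>j. \<bar>a * u j + b * v j\<bar> powr q)"
    by (intro summable_comparison_test'[where N=0,
          OF summable_mult[OF summable_add[OF su sv], of "(2 * max \<bar>a\<bar> \<bar>b\<bar>) powr q"]])
       (simp add: abs_lincomb_powr_le)
  thus ?thesis using False by (simp add: in_lp_def q_def)
qed

lemma in_lp_scale: "1 \<le> p \<Longrightarrow> in_lp p y \<Longrightarrow> in_lp p (\<lambda>j. c * y j)"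
  using in_lp_lincomb[of p y y c 0] by simp

lemma in_lp_sum:
  fixes N :: nat
  assumes p: "1 \<le> p" and z: "\<forall>j<N. in_lp p (z j)"
  shows "in_lp p (\<lambda>t. \<Sum>j<N. c j * z j t)"
  using z
proof (induction N)
  case 0 thus ?case by (simp add: in_lp_zero)
next
  case (Suc N)
  hence "in_lp p (\<lambda>t. 1 * (\<Sum>j<N. c j * z j t) + c N * z N t)"
    by (intro in_lp_lincomb p) auto
  thus ?case by simp
qed

lemma lp_norm_nonneg: "in_lp p y \<Longrightarrow> 0 \<le> lp_norm p y"
proof (cases "p = \<infinity>")
  case True
  assume "in_lp p y"
  hence "\<bar>y 0\<bar> \<le> (SUP j. \<bar>y j\<bar>)" using True by (intro cSUP_upper) (auto simp: in_lp_def)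
  thus ?thesis using True by (simp add: lp_norm_def)
qed (simp add: lp_norm_def)

lemma abs_le_lp_norm_inf:
  assumes "in_lp \<infinity> y" shows "\<bar>y t\<bar> \<le> lp_norm \<infinity> y"
  using assms by (auto simp: in_lp_def lp_norm_def intro: cSUP_upper)

lemma lp_norm_scale_le:
  assumes p: "1 \<le> p" and y: "in_lp p y"
  shows "lp_norm p (\<lambda>j. c * y j) \<le> \<bar>c\<bar> * lp_norm p y"
proof (cases "p = \<infinity>")
  case True
  have "(SUP j. \<bar>c * y j\<bar>) \<le> \<bar>c\<bar> * (SUP j. \<bar>y j\<bar>)"
  proof (rule cSUP_least)
    fix j
    have "\<bar>y j\<bar> \<le> (SUP j. \<bar>y j\<bar>)" using abs_le_lp_norm_inf[of y j] y True by (simp add: lp_norm_def)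
    thus "\<bar>c * y j\<bar> \<le> \<bar>c\<bar> * (SUP j. \<bar>y j\<bar>)" by (simp add: abs_mult mult_left_mono)
  qed auto
  thus ?thesis using True by (simp add: lp_norm_def)
next
  case False
  define q where "q = real_of_ereal p"
  have q: "q \<ge> 1" using finite_exponent_ge_1[OF p False] by (simp add: q_def)
  have su: "summable (\<lambda>j. \<bar>y j\<bar> powr q)" using y False by (auto simp: in_lp_def q_def)
  have "(\<Sum>j. \<bar>c * y j\<bar> powr q) = \<bar>c\<bar> powr q * (\<Sum>j. \<bar>y j\<bar> powr q)"
    by (simp add: abs_mult powr_mult suminf_mult[OF su])
  hence "(\<Sum>j. \<bar>c * y j\<bar> powr q) powr (1/q) = (\<bar>c\<bar> powr q) powr (1/q) * (\<Sum>j. \<bar>y j\<bar> powr q) powr (1/q)"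
    by (simp add: powr_mult suminf_nonneg su)
  also have "(\<bar>c\<bar> powr q) powr (1/q) = \<bar>c\<bar>" using q by (simp add: powr_powr)
  finally show ?thesis using False by (simp add: lp_norm_def q_def)
qed

lemma lp_norm_eq_0:
  assumes p: "1 \<le> p" and y: "in_lp p y" and z: "lp_norm p y = 0"
  shows "y = (\<lambda>_. 0)"
proof (cases "p = \<infinity>")
  case True
  thus ?thesis using abs_le_lp_norm_inf y z by fastforce
next
  case False
  define q where "q = real_of_ereal p"
  have su: "summable (\<lambda>j. \<bar>y j\<bar> powr q)" using y False by (auto simp: in_lp_def q_def)
  have "(\<Sum>j. \<bar>y j\<bar> powr q) = 0" using z False by (simp add: lp_norm_def q_def)
  hence "\<forall>j. \<bar>y j\<bar> powr q = 0" using suminf_eq_zero_iff[OF su] by simp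
  thus ?thesis by auto
qed

lemma lp_norm_zero: "1 \<le> p \<Longrightarrow> lp_norm p (\<lambda>_. 0) = 0"
  by (auto simp: lp_norm_def)

lemma lp_norm_one_sum:
  assumes p: "1 \<le> p" "p \<noteq> \<infinity>" and y: "in_lp p y" "lp_norm p y = 1"
  shows "(\<Sum>t. \<bar>y t\<bar> powr real_of_ereal p) = 1"
proof -
  define q where "q = real_of_ereal p"
  have q: "q \<ge> 1" using finite_exponent_ge_1[OF p] by (simp add: q_def)
  define X where "X = (\<Sum>t. \<bar>y t\<bar> powr q)"
  have X0: "X \<ge> 0" using y p by (auto simp: X_def in_lp_def q_def intro!: suminf_nonneg)
  have X1: "X powr (1/q) = 1" using y p by (simp add: lp_norm_def X_def q_def)
  hence "X \<noteq> 0" by auto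
  hence "X = (X powr (1/q)) powr q" using X0 q by (simp add: powr_powr)
  thus ?thesis using X1 by (simp add: X_def q_def)
qed

lemma multilinear_slot_sum:
  fixes N :: nat
  assumes lin: "multilinear_lp p m L" and p: "1 \<le> p"
    and xs: "length xs = m" "\<forall>y\<in>set xs. in_lp p y" and i: "i < m"
    and z: "\<forall>j<N. in_lp p (z j)"
  shows "L (xs[i := (\<lambda>t. \<Sum>j<N. c j * z j t)]) = (\<Sum>j<N. c j * L (xs[i := z j]))"
  using z
proof (induction N)
  case 0
  have "L (xs[i := (\<lambda>t. 0 * 0 + 0 * 0)]) = 0 * L (xs[i := (\<lambda>_. 0)]) + 0 * L (xs[i := (\<lambda>_. 0)])"
    using lin xs i in_lp_zero unfolding multilinear_lp_def by blast
  thus ?case by simp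
next
  case (Suc N)
  have "L (xs[i := (\<lambda>t. 1 * (\<Sum>j<N. c j * z j t) + c N * z N t)]) =
        1 * L (xs[i := (\<lambda>t. \<Sum>j<N. c j * z j t)]) + c N * L (xs[i := z N])"
    using lin[unfolded multilinear_lp_def, rule_format, of xs i "\<lambda>t. \<Sum>j<N. c j * z j t" "z N" 1 "c N"]
      xs i Suc.prems in_lp_sum[OF p, of N z c] by auto
  thus ?case using Suc by simp
qed

definition index_lists :: "nat \<Rightarrow> nat \<Rightarrow> nat list set" where
  "index_lists r N = {fs. length fs = r \<and> set fs \<subseteq> {..<N}}"

lemma finite_index_lists: "finite (index_lists r N)"
  unfolding index_lists_def by (rule finite_subset[OF _ finite_lists_length_eq[of "{..<N}" r]]) auto

lemma index_lists_Suc: "index_lists (Suc r) N = (\<lambda>(j,fs). j # fs) ` ({..<N} \<times> index_lists r N)"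
  unfolding index_lists_def by (auto simp: length_Suc_conv image_iff)

lemma multilinear_expand:
  fixes N :: nat
  assumes lin: "multilinear_lp p m L" and p: "1 \<le> p" and z: "\<forall>j<N. in_lp p (z j)"
  shows "length pre + r + length ws = m \<Longrightarrow> \<forall>y\<in>set pre \<union> set ws. in_lp p y \<Longrightarrow>
    L (pre @ replicate r (\<lambda>t. \<Sum>j<N. c j * z j t) @ ws) =
    (\<Sum>fs\<in>index_lists r N. prod_list (map c fs) * L (pre @ map z fs @ ws))"
proof (induction r arbitrary: pre)
  case 0
  have "index_lists 0 N = {[]}" by (auto simp: index_lists_def)
  thus ?case by simp
next
  case (Suc r)
  define V where "V = (\<lambda>t. \<Sum>j<N. c j * z j t)"
  have V: "in_lp p V" unfolding V_def by (rule in_lp_sum[OF p z])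
  define xs where "xs = pre @ V # (replicate r V @ ws)"
  have xs: "length xs = m" "\<forall>y\<in>set xs. in_lp p y"
    using Suc.prems V by (auto simp: xs_def)
  have i: "length pre < m" using Suc.prems by simp
  have inj: "inj_on (\<lambda>(j::nat,fs). j # fs) ({..<N} \<times> index_lists r N)" by (auto simp: inj_on_def)
  have "L (pre @ replicate (Suc r) V @ ws) = L (xs[length pre := V])"
    by (simp add: xs_def)
  also have "\<dots> = (\<Sum>j<N. c j * L ((pre @ [z j]) @ replicate r V @ ws))"
    unfolding V_def by (subst multilinear_slot_sum[OF lin p xs i z]) (simp add: xs_def V_def)
  also have "\<dots> = (\<Sum>j<N. c j * (\<Sum>fs\<in>index_lists r N. prod_list (map c fs) * L ((pre @ [z j]) @ map z fs @ ws)))"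
    unfolding V_def using Suc.prems z by (intro sum.cong refl arg_cong2[where f="(*)"] Suc.IH) auto
  also have "\<dots> = (\<Sum>(j,fs)\<in>{..<N} \<times> index_lists r N. prod_list (map c (j#fs)) * L (pre @ map z (j#fs) @ ws))"
    unfolding sum.cartesian_product[symmetric] by (simp add: sum_distrib_left mult.assoc)
  also have "\<dots> = (\<Sum>fs\<in>index_lists (Suc r) N. prod_list (map c fs) * L (pre @ map z fs @ ws))"
    unfolding index_lists_Suc sum.reindex[OF inj] by (simp add: case_prod_beta')
  finally show ?case by (simp add: V_def)
qed

lemma multilinear_homogeneous:
  assumes "multilinear_lp p m L" "1 \<le> p" "in_lp p y"
  shows "L (replicate m (\<lambda>t. c * y t)) = c ^ m * L (replicate m y)"
proof -
  have "index_lists m (Suc 0) = {replicate m 0}"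
    by (auto simp: index_lists_def intro: replicate_eqI)
  thus ?thesis using multilinear_expand[OF assms(1,2), of 1 "\<lambda>_. y" "[]" m "[]" "\<lambda>_. c"] assms(3)
    by simp
qed

lemma multilinear_zero:
  assumes "multilinear_lp p m L" "1 \<le> p" "m \<ge> 1"
  shows "L (replicate m (\<lambda>_. 0)) = 0"
  using multilinear_homogeneous[OF assms(1,2) in_lp_zero, of 0] assms(3) by (simp add: power_0_left)

text \<open>Continuity at the origin bounds L_hat on a small ball, hence on the unit ball by homogeneity.\<close>
lemma poly_norm_bdd:
  assumes lin: "multilinear_lp p m L" and CONT: "continuous_lp p m L" and p: "1 \<le> p" and m: "m \<ge> 1"
  shows "bdd_above {\<bar>poly_hat m L x\<bar> | x. in_lp p x \<and> lp_norm p x \<le> 1}"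
proof -
  define xs0 where "xs0 = replicate m (\<lambda>_::nat. 0::real)"
  have L0: "L xs0 = 0" using multilinear_zero[OF lin p m] by (simp add: xs0_def)
  have xs0: "length xs0 = m" "\<forall>y\<in>set xs0. in_lp p y" by (auto simp: xs0_def in_lp_zero)
  obtain d where d: "d > 0" and near0: "\<forall>ys. length ys = m \<and> (\<forall>y\<in>set ys. in_lp p y) \<and>
        (\<forall>i<m. lp_norm p (\<lambda>j. (ys ! i) j - (xs0 ! i) j) < d) \<longrightarrow> \<bar>L ys - L xs0\<bar> < 1"
    using CONT xs0 zero_less_one unfolding continuous_lp_def by blast
  define c where "c = d / 2"
  have c: "c > 0" using d by (simp add: c_def)
  show ?thesis unfolding bdd_above_def
  proof (intro exI ballI)
    fix v assume "v \<in> {\<bar>poly_hat m L x\<bar> | x. in_lp p x \<and> lp_norm p x \<le> 1}"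
    then obtain x where v: "v = \<bar>poly_hat m L x\<bar>" and x: "in_lp p x" "lp_norm p x \<le> 1"
      by auto
    have cx: "in_lp p (\<lambda>t. c * x t)" by (rule in_lp_scale[OF p x(1)])
    have "lp_norm p (\<lambda>t. c * x t) \<le> c * 1"
      using lp_norm_scale_le[OF p x(1), of c] c x by (simp add: order_trans)
    also have "\<dots> < d" using d by (simp add: c_def)
    finally have "\<bar>L (replicate m (\<lambda>t. c * x t)) - L xs0\<bar> < 1"
      using cx near0 by (auto simp: xs0_def)
    hence "c ^ m * v < 1"
      using multilinear_homogeneous[OF lin p x(1), of c] L0 c by (simp add: v poly_hat_def abs_mult)
    thus "v \<le> 1 / c ^ m" using c by (simp add: field_simps)
  qed
qed

lemma poly_norm_nonneg:
  assumes "multilinear_lp p m L" "continuous_lp p m L" "1 \<le> p" "m \<ge> 1"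
  shows "0 \<le> poly_norm p m L"
proof -
  have "\<bar>poly_hat m L (\<lambda>_. 0)\<bar> \<le> poly_norm p m L"
    unfolding poly_norm_def using in_lp_zero lp_norm_zero[OF assms(3)]
    by (intro cSup_upper[OF _ poly_norm_bdd[OF assms]]) auto
  thus ?thesis by (meson abs_ge_zero order.trans)
qed

lemma poly_norm_bound:
  assumes lin: "multilinear_lp p m L" and CONT: "continuous_lp p m L" and p: "1 \<le> p" and m: "m \<ge> 1"
    and y: "in_lp p y"
  shows "\<bar>L (replicate m y)\<bar> \<le> poly_norm p m L * lp_norm p y ^ m"
proof (cases "lp_norm p y = 0")
  case True
  thus ?thesis using lp_norm_eq_0[OF p y] multilinear_zero[OF lin p m] m by (simp add: power_0_left)
next
  case False
  define s where "s = lp_norm p y"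
  have s: "s > 0" using False lp_norm_nonneg[OF y] by (simp add: s_def)
  define y' where "y' = (\<lambda>t. (1/s) * y t)"
  have y': "in_lp p y'" unfolding y'_def by (rule in_lp_scale[OF p y])
  have "lp_norm p y' \<le> \<bar>1/s\<bar> * s" unfolding y'_def s_def by (rule lp_norm_scale_le[OF p y])
  hence "lp_norm p y' \<le> 1" using s by simp
  hence le: "\<bar>poly_hat m L y'\<bar> \<le> poly_norm p m L"
    unfolding poly_norm_def using y' by (intro cSup_upper[OF _ poly_norm_bdd[OF lin CONT p m]]) auto
  have "y = (\<lambda>t. s * y' t)" using s by (auto simp: y'_def)
  hence "\<bar>L (replicate m y)\<bar> = s ^ m * \<bar>poly_hat m L y'\<bar>"
    using multilinear_homogeneous[OF lin p y', of s] s by (simp add: poly_hat_def abs_mult)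
  also have "\<dots> \<le> s ^ m * poly_norm p m L" using le s by (intro mult_left_mono) auto
  finally show ?thesis by (simp add: s_def mult.commute)
qed

section \<open>Polarization with random signs\<close>

definition sign_vectors :: "nat \<Rightarrow> (nat \<Rightarrow> real) set" where
  "sign_vectors m = PiE {..<m} (\<lambda>_. {-1,1})"

lemma finite_sign_vectors: "finite (sign_vectors m)"
  unfolding sign_vectors_def by (intro finite_PiE) auto

lemma card_sign_vectors: "card (sign_vectors m) = 2 ^ m"
  unfolding sign_vectors_def by (subst card_PiE) (auto simp: numeral_2_eq_2)

lemma abs_sign: "es \<in> sign_vectors m \<Longrightarrow> j < m \<Longrightarrow> \<bar>es j\<bar> = 1"
  unfolding sign_vectors_def by (auto simp: PiE_def Pi_def)

lemma abs_prod_signs: "es \<in> sign_vectors m \<Longrightarrow> \<bar>\<Prod>j<m. es j\<bar> = 1"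
  by (simp add: abs_prod abs_sign)

lemma index_list_distinct_set:
  assumes "fs \<in> index_lists m m" "distinct fs"
  shows "set fs = {..<m}"
proof -
  have "set fs \<subseteq> {..<m}" "card (set fs) = m" using assms by (auto simp: index_lists_def distinct_card)
  thus ?thesis by (intro card_subset_eq) auto
qed

text \<open>Orthogonality of sign characters: averaging (prod_j e_j) e_{f_1} ... e_{f_m} over all signs
  kills every index list that is not a permutation of 0,...,m-1.  For a non-permutation some
  index j0 is missing, and flipping e_{j0} is a sign-reversing involution.\<close>
lemma sign_character_sum:
  assumes fs: "fs \<in> index_lists m m"
  shows "(\<Sum>es\<in>sign_vectors m. (\<Prod>j<m. es j) * prod_list (map es fs)) = (if distinct fs then 2^m else 0)"
proof (cases "distinct fs")
  case True
  have "(\<Prod>j<m. es j) * prod_list (map es fs) = 1" if es: "es \<in> sign_vectors m" for es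
  proof -
    have "prod_list (map es fs) = (\<Prod>j<m. es j)"
      using prod.distinct_set_conv_list[OF True, of es] index_list_distinct_set[OF fs True] by simp
    hence "(\<Prod>j<m. es j) * prod_list (map es fs) = \<bar>\<Prod>j<m. es j\<bar>^2"
      by (simp add: power2_eq_square)
    thus ?thesis using abs_prod_signs[OF es] by simp
  qed
  hence "(\<Sum>es\<in>sign_vectors m. (\<Prod>j<m. es j) * prod_list (map es fs)) = (\<Sum>es\<in>sign_vectors m. 1)"
    by (rule sum.cong[OF refl])
  thus ?thesis using True by (simp add: card_sign_vectors)
next
  case False
  have "length fs = m" using fs by (simp add: index_lists_def)
  hence "card (set fs) \<noteq> m" using False card_distinct by metis
  hence "set fs \<noteq> {..<m}" by (metis card_lessThan)
  then obtain j0 where j0: "j0 < m" "j0 \<notin> set fs" using fs by (auto simp: index_lists_def)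
  define flip where "flip = (\<lambda>es::nat\<Rightarrow>real. es(j0 := - es j0))"
  define T where "T = (\<lambda>es::nat\<Rightarrow>real. (\<Prod>j<m. es j) * prod_list (map es fs))"
  have flip_sign: "flip es \<in> sign_vectors m" if "es \<in> sign_vectors m" for es
    using that j0 unfolding sign_vectors_def flip_def by (auto simp: PiE_def Pi_def extensional_def)
  have flip_flip: "flip (flip es) = es" for es unfolding flip_def by auto
  have T_flip: "T (flip es) = - T es" for es
  proof -
    have "(\<Prod>j\<in>{..<m} - {j0}. flip es j) = (\<Prod>j\<in>{..<m} - {j0}. es j)"
      unfolding flip_def by (intro prod.cong) auto
    hence A: "(\<Prod>j<m. flip es j) = - (\<Prod>j<m. es j)"
      using j0 prod.remove[of "{..<m}" j0 "flip es"] prod.remove[of "{..<m}" j0 es]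
      by (simp add: flip_def)
    have B: "map (flip es) fs = map es fs"
      using j0 unfolding flip_def by (intro map_cong) auto
    show ?thesis unfolding T_def A B by simp
  qed
  have "sum T (sign_vectors m) = sum (\<lambda>es. T (flip es)) (sign_vectors m)"
    by (rule sum.reindex_bij_witness[of _ flip flip]) (auto simp: flip_flip flip_sign)
  also have "\<dots> = - sum T (sign_vectors m)" by (simp add: T_flip sum_negf)
  finally show ?thesis using False by (simp add: T_def)
qed

lemma prod_list_map_mult:
  "prod_list (map (\<lambda>j. f j * g j) xs) = prod_list (map f xs) * prod_list (map (g::_\<Rightarrow>real) xs)"
  by (induction xs) (auto simp: algebra_simps)

lemma card_permutation_lists: "card {fs\<in>index_lists m m. distinct fs} = fact m"
proof -
  have "{fs\<in>index_lists m m. distinct fs} = {xs. length xs = m \<and> distinct xs \<and> set xs \<subseteq> {..<m}}"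
    by (auto simp: index_lists_def)
  thus ?thesis using card_lists_distinct_length_eq[of "{..<m}" m] by (simp add: fact_prod)
qed

lemma symmetric_permute:
  assumes sym: "symmetric_lp p m L" and zs: "length zs = m" "\<forall>y\<in>set zs. in_lp p y"
    and fs: "fs \<in> index_lists m m" "distinct fs"
  shows "L (map (nth zs) fs) = L zs"
proof -
  have "mset fs = mset [0..<m]"
    using index_list_distinct_set[OF fs] fs(2)
    by (subst set_eq_iff_mset_eq_distinct[symmetric]) (auto simp: atLeast0LessThan)
  hence "mset zs = mset (map (nth zs) fs)"
    using zs by (metis map_nth mset_map)
  thus ?thesis using sym zs unfolding symmetric_lp_def by metis
qed

lemma polarization_formula:
  assumes lin: "multilinear_lp p m L" and sym: "symmetric_lp p m L" and p: "1 \<le> p"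
    and zs: "length zs = m" "\<forall>y\<in>set zs. in_lp p y"
  shows "(\<Sum>es\<in>sign_vectors m. (\<Prod>j<m. es j) * L (replicate m (\<lambda>t. \<Sum>j<m. (es j * d j) * (zs!j) t)))
         = 2^m * fact m * (\<Prod>j<m. d j) * L zs"
proof -
  have z: "\<forall>j<m. in_lp p (zs!j)" using zs by auto
  let ?D = "{fs\<in>index_lists m m. distinct fs}"
  have expand: "L (replicate m (\<lambda>t. \<Sum>j<m. (es j * d j) * (zs!j) t)) =
      (\<Sum>fs\<in>index_lists m m. prod_list (map (\<lambda>j. es j * d j) fs) * L (map (nth zs) fs))" for es
    using multilinear_expand[OF lin p z, of "[]" m "[]" "\<lambda>j. es j * d j"] by simp
  have permuted: "prod_list (map d fs) * L (map (nth zs) fs) = (\<Prod>j<m. d j) * L zs"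
    if fs: "fs \<in> ?D" for fs
    using prod.distinct_set_conv_list[of fs d] index_list_distinct_set[of fs m]
      symmetric_permute[OF sym zs, of fs] fs by simp
  have "(\<Sum>es\<in>sign_vectors m. (\<Prod>j<m. es j) * L (replicate m (\<lambda>t. \<Sum>j<m. (es j * d j) * (zs!j) t)))
      = (\<Sum>fs\<in>index_lists m m. (prod_list (map d fs) * L (map (nth zs) fs)) *
           (\<Sum>es\<in>sign_vectors m. (\<Prod>j<m. es j) * prod_list (map es fs)))"
  proof -
    have "(\<Sum>es\<in>sign_vectors m. (\<Prod>j<m. es j) * L (replicate m (\<lambda>t. \<Sum>j<m. (es j * d j) * (zs!j) t)))
      = (\<Sum>es\<in>sign_vectors m. \<Sum>fs\<in>index_lists m m. (prod_list (map d fs) * L (map (nth zs) fs)) *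
           ((\<Prod>j<m. es j) * prod_list (map es fs)))"
      unfolding expand by (simp add: sum_distrib_left prod_list_map_mult mult_ac)
    thus ?thesis by (subst (asm) sum.swap) (simp add: sum_distrib_left)
  qed
  also have "\<dots> = (\<Sum>fs\<in>index_lists m m. if distinct fs then 2^m * ((\<Prod>j<m. d j) * L zs) else 0)"
    by (intro sum.cong refl) (auto simp: sign_character_sum permuted)
  also have "\<dots> = (\<Sum>fs\<in>?D. 2^m * ((\<Prod>j<m. d j) * L zs))"
    by (rule sum.inter_filter[OF finite_index_lists, symmetric])
  also have "\<dots> = real (card ?D) * (2^m * ((\<Prod>j<m. d j) * L zs))"
    by simp
  finally show ?thesis by (simp add: mult_ac card_permutation_lists)
qed

section \<open>Combinations of disjointly supported unit vectors\<close>

lemma disjoint_supports_single: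
  fixes x :: "nat \<Rightarrow> nat \<Rightarrow> real"
  assumes disj: "\<forall>i<n. \<forall>j<n. i \<noteq> j \<longrightarrow> supp (x i) \<inter> supp (x j) = {}"
  obtains i0 where "\<forall>i<n. i \<noteq> i0 \<longrightarrow> x i t = 0"
proof (cases "\<exists>i0<n. x i0 t \<noteq> 0")
  case True
  then obtain i0 where "i0 < n" "x i0 t \<noteq> 0" by blast
  hence "\<forall>i<n. i \<noteq> i0 \<longrightarrow> x i t = 0" using disj unfolding supp_def by blast
  thus ?thesis by (rule that)
qed (use that in blast)

lemma sum_single_support:
  fixes f :: "nat \<Rightarrow> 'a::comm_monoid_add"
  assumes "\<forall>i<n. i \<noteq> i0 \<longrightarrow> f i = 0"
  shows "(\<Sum>i<n. f i) = (if i0 < n then f i0 else 0)"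
proof -
  have "(\<Sum>i<n. f i) = (\<Sum>i<n. if i = i0 then f i else 0)"
    using assms by (intro sum.cong) auto
  thus ?thesis by simp
qed

lemma disjoint_abs_powr:
  fixes x :: "nat \<Rightarrow> nat \<Rightarrow> real"
  assumes disj: "\<forall>i<n. \<forall>j<n. i \<noteq> j \<longrightarrow> supp (x i) \<inter> supp (x j) = {}"
  shows "\<bar>\<Sum>i<n. a i * x i t\<bar> powr q = (\<Sum>i<n. \<bar>a i\<bar> powr q * \<bar>x i t\<bar> powr q)"
proof -
  obtain i0 where "\<forall>i<n. i \<noteq> i0 \<longrightarrow> x i t = 0" using disjoint_supports_single[OF disj] .
  thus ?thesis
    using sum_single_support[of n i0 "\<lambda>i. a i * x i t"]
      sum_single_support[of n i0 "\<lambda>i. \<bar>a i\<bar> powr q * \<bar>x i t\<bar> powr q"]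
    by (simp add: abs_mult powr_mult)
qed

lemma lp_norm_disjoint_pow:
  fixes x :: "nat \<Rightarrow> nat \<Rightarrow> real"
  assumes p: "1 \<le> p" "p \<noteq> \<infinity>" and x: "\<forall>i<n. in_lp p (x i) \<and> lp_norm p (x i) = 1"
    and disj: "\<forall>i<n. \<forall>j<n. i \<noteq> j \<longrightarrow> supp (x i) \<inter> supp (x j) = {}" and m: "m \<ge> 1"
  shows "lp_norm p (\<lambda>t. \<Sum>i<n. a i * x i t) ^ m =
         (\<Sum>i<n. \<bar>a i\<bar> powr real_of_ereal p) powr (real m / real_of_ereal p)"
proof -
  define q where "q = real_of_ereal p"
  have q: "q \<ge> 1" using finite_exponent_ge_1[OF p] by (simp add: q_def)
  have su: "summable (\<lambda>t. \<bar>x i t\<bar> powr q)" if "i < n" for i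
    using x that p by (auto simp: in_lp_def q_def)
  define X where "X = (\<Sum>i<n. \<bar>a i\<bar> powr q)"
  have X0: "X \<ge> 0" by (simp add: X_def sum_nonneg)
  have "(\<Sum>t. \<bar>\<Sum>i<n. a i * x i t\<bar> powr q) = (\<Sum>t. \<Sum>i<n. \<bar>a i\<bar> powr q * \<bar>x i t\<bar> powr q)"
    by (simp add: disjoint_abs_powr[OF disj])
  also have "\<dots> = (\<Sum>i<n. \<bar>a i\<bar> powr q * (\<Sum>t. \<bar>x i t\<bar> powr q))"
    by (subst suminf_sum) (auto intro!: summable_mult su sum.cong suminf_mult)
  also have "\<dots> = X"
    using lp_norm_one_sum[OF p] x unfolding X_def by (intro sum.cong refl) (auto simp: q_def)
  finally have "lp_norm p (\<lambda>t. \<Sum>i<n. a i * x i t) = X powr (1/q)"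
    using p by (simp add: lp_norm_def q_def)
  also have "(X powr (1/q)) ^ m = X powr (real m / q)"
  proof (cases "X = 0")
    case False
    thus ?thesis using X0 q by (simp add: powr_realpow[symmetric] powr_powr)
  qed (use m in \<open>simp add: power_0_left\<close>)
  finally show ?thesis by (simp add: X_def q_def)
qed

lemma lp_norm_disjoint_unit_coeffs:
  fixes x :: "nat \<Rightarrow> nat \<Rightarrow> real"
  assumes p: "1 \<le> p" and x: "\<forall>i<n. in_lp p (x i) \<and> lp_norm p (x i) = 1"
    and disj: "\<forall>i<n. \<forall>j<n. i \<noteq> j \<longrightarrow> supp (x i) \<inter> supp (x j) = {}" and m: "m \<ge> 1"
    and a: "\<forall>i<n. \<bar>a i\<bar> \<le> 1"
  shows "lp_norm p (\<lambda>t. \<Sum>i<n. a i * x i t) ^ m \<le>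
         (if p = \<infinity> then 1 else real n powr (real m / real_of_ereal p))"
proof (cases "p = \<infinity>")
  case True
  have pt: "\<bar>\<Sum>i<n. a i * x i t\<bar> \<le> 1" for t
  proof -
    have "\<bar>a i * x i t\<bar> \<le> 1" if "i < n" for i
      using abs_le_lp_norm_inf[of "x i" t] x a that True by (auto simp: abs_mult mult_le_one)
    moreover obtain i0 where "\<forall>i<n. i \<noteq> i0 \<longrightarrow> x i t = 0"
      using disjoint_supports_single[OF disj] .
    ultimately show ?thesis using sum_single_support[of n i0 "\<lambda>i. a i * x i t"] by simp
  qed
  have "in_lp p (\<lambda>t. \<Sum>i<n. a i * x i t)" using pt True by (auto simp: in_lp_def bdd_above_def)
  moreover have "lp_norm p (\<lambda>t. \<Sum>i<n. a i * x i t) \<le> 1"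
    using pt True by (simp add: lp_norm_def cSUP_least)
  ultimately show ?thesis using True lp_norm_nonneg by (simp add: power_le_one)
next
  case False
  define q where "q = real_of_ereal p"
  have q: "q \<ge> 1" using finite_exponent_ge_1[OF p False] by (simp add: q_def)
  have "(\<Sum>i<n. \<bar>a i\<bar> powr q) \<le> (\<Sum>i<n. 1)"
  proof (intro sum_mono)
    fix i assume "i \<in> {..<n}"
    hence "\<bar>a i\<bar> powr q \<le> 1 powr q" using a q by (intro powr_mono2) auto
    thus "\<bar>a i\<bar> powr q \<le> 1" by simp
  qed
  hence "(\<Sum>i<n. \<bar>a i\<bar> powr q) powr (real m / q) \<le> real n powr (real m / q)"
    using q by (intro powr_mono2) (auto intro: sum_nonneg)
  thus ?thesis using lp_norm_disjoint_pow[OF p False x disj m, of a] False by (simp add: q_def)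
qed

definition block_list :: "nat \<Rightarrow> (nat \<Rightarrow> nat) \<Rightarrow> nat list" where
  "block_list n k = concat (map (\<lambda>i. replicate (k i) i) [0..<n])"

definition positions :: "nat list \<Rightarrow> nat \<Rightarrow> nat set" where
  "positions b i = {j. j < length b \<and> b ! j = i}"

lemma block_list_Suc: "block_list (Suc n) k = block_list n k @ replicate (k n) n"
  by (simp add: block_list_def)

lemma power_tuple_block_list: "power_tuple n x k = map x (block_list n k)"
  by (simp add: power_tuple_def block_list_def map_concat o_def)

lemma length_block_list: "length (block_list n k) = (\<Sum>i<n. k i)"
  by (induction n) (auto simp: block_list_Suc block_list_def)

lemma set_block_list: "set (block_list n k) \<subseteq> {..<n}"
  by (induction n) (auto simp: block_list_Suc block_list_def)

lemma card_positions_block_list: "i < n \<Longrightarrow> card (positions (block_list n k) i) = k i"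
proof -
  have "length (filter (\<lambda>y. y = i) (block_list n k)) = (if i < n then k i else 0)"
    by (induction n) (auto simp: block_list_Suc block_list_def filter_replicate less_Suc_eq)
  thus "i < n \<Longrightarrow> ?thesis" by (simp add: positions_def length_filter_conv_card)
qed

lemma positions_block_list:
  "\<forall>i<n. positions (block_list n k) i \<subseteq> {..<\<Sum>i<n. k i} \<and> card (positions (block_list n k) i) = k i"
proof (intro allI impI conjI)
  show "positions (block_list n k) i \<subseteq> {..<\<Sum>i<n. k i}" for i
    by (auto simp: positions_def length_block_list)
qed (rule card_positions_block_list)

lemma prod_block_list: "prod_list (map f (block_list n k)) = (\<Prod>i<n. f i ^ k i)"
  by (induction n) (auto simp: block_list_Suc block_list_def)

lemma prod_list_conv_nth: "prod_list (map f xs) = (\<Prod>j<length xs. f (xs ! j))"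
proof -
  have "prod_list (map f xs) = prod_list (map (\<lambda>j. f (xs ! j)) [0..<length xs])"
    by (subst map_nth[symmetric]) (simp only: map_map o_def)
  also have "\<dots> = (\<Prod>j\<in>set [0..<length xs]. f (xs ! j))"
    by (rule prod.distinct_set_conv_list[symmetric]) simp
  finally show ?thesis by (simp add: atLeast0LessThan)
qed

lemma regroup_by_positions:
  fixes b :: "nat list" and x :: "nat \<Rightarrow> nat \<Rightarrow> real"
  assumes b: "set b \<subseteq> {..<n}"
  shows "(\<Sum>j<length b. (es j * g (b!j)) * (map x b ! j) t) =
         (\<Sum>i<n. (g i * (\<Sum>j\<in>positions b i. es j)) * x i t)"
proof -
  have "(\<Sum>j<length b. (es j * g (b!j)) * (map x b ! j) t) = (\<Sum>j<length b. es j * g (b!j) * x (b!j) t)"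
    by (intro sum.cong) auto
  also have "\<dots> = (\<Sum>i<n. \<Sum>j\<in>{j\<in>{..<length b}. b!j = i}. es j * g (b!j) * x (b!j) t)"
    by (rule sum.group[symmetric]) (use b nth_mem in \<open>fastforce+\<close>)
  also have "\<dots> = (\<Sum>i<n. (g i * (\<Sum>j\<in>positions b i. es j)) * x i t)"
  proof (intro sum.cong refl)
    fix i
    have "(\<Sum>j\<in>{j\<in>{..<length b}. b!j = i}. es j * g (b!j) * x (b!j) t) =
        (\<Sum>j\<in>positions b i. g i * x i t * es j)"
      by (intro sum.cong) (auto simp: positions_def)
    thus "(\<Sum>j\<in>{j\<in>{..<length b}. b!j = i}. es j * g (b!j) * x (b!j) t) =
        (g i * (\<Sum>j\<in>positions b i. es j)) * x i t"
      by (simp add: sum_distrib_left mult_ac)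
  qed
  finally show ?thesis .
qed

lemma polarization_bound:
  fixes b :: "nat list" and x :: "nat \<Rightarrow> nat \<Rightarrow> real" and g :: "nat \<Rightarrow> real"
  assumes lin: "multilinear_lp p m L" and sym: "symmetric_lp p m L" and cont: "continuous_lp p m L"
    and p: "1 \<le> p" and m: "m \<ge> 1"
    and b: "length b = m" "set b \<subseteq> {..<n}" and x: "\<forall>i<n. in_lp p (x i)"
  shows "2^m * fact m * \<bar>prod_list (map g b)\<bar> * \<bar>L (map x b)\<bar> \<le>
    poly_norm p m L * (\<Sum>es\<in>sign_vectors m. lp_norm p (\<lambda>t. \<Sum>i<n. (g i * (\<Sum>j\<in>positions b i. es j)) * x i t) ^ m)"
proof -
  define V where "V = (\<lambda>es t. \<Sum>i<n. (g i * (\<Sum>j\<in>positions b i. es j)) * x i t)"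
  have V: "in_lp p (V es)" for es unfolding V_def using x by (intro in_lp_sum[OF p]) auto
  have zs: "length (map x b) = m" "\<forall>y\<in>set (map x b). in_lp p y" using b x by auto
  have "(\<Sum>es\<in>sign_vectors m. (\<Prod>j<m. es j) * L (replicate m (V es))) =
      2^m * fact m * prod_list (map g b) * L (map x b)"
    using polarization_formula[OF lin sym p zs, of "\<lambda>j. g (b!j)"] regroup_by_positions[OF b(2)]
    by (simp add: V_def b(1)[symmetric] prod_list_conv_nth)
  hence "2^m * fact m * \<bar>prod_list (map g b)\<bar> * \<bar>L (map x b)\<bar> =
      \<bar>\<Sum>es\<in>sign_vectors m. (\<Prod>j<m. es j) * L (replicate m (V es))\<bar>"
    by (simp add: abs_mult)
  also have "\<dots> \<le> (\<Sum>es\<in>sign_vectors m. \<bar>L (replicate m (V es))\<bar>)"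
  proof -
    have "\<bar>(\<Prod>j<m. es j) * L (replicate m (V es))\<bar> = \<bar>L (replicate m (V es))\<bar>"
      if "es \<in> sign_vectors m" for es
      using abs_prod_signs[OF that] by (simp add: abs_mult)
    hence "(\<Sum>es\<in>sign_vectors m. \<bar>(\<Prod>j<m. es j) * L (replicate m (V es))\<bar>) =
        (\<Sum>es\<in>sign_vectors m. \<bar>L (replicate m (V es))\<bar>)"
      by (rule sum.cong[OF refl])
    thus ?thesis by (metis sum_abs)
  qed
  also have "\<dots> \<le> (\<Sum>es\<in>sign_vectors m. poly_norm p m L * lp_norm p (V es) ^ m)"
    by (intro sum_mono poly_norm_bound[OF lin cont p m V])
  finally show ?thesis by (simp add: V_def sum_distrib_left)
qed

section \<open>Moments of Rademacher sums\<close>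

text \<open>A lower bound for the Gamma function: comparing the integrand of Gamma(x+1) with
  x^x e^(-t) on [x, infinity).\<close>
lemma Gamma_lower_bound:
  assumes "x > (0::real)" shows "x powr x * exp (-x) \<le> Gamma (x+1)"
proof -
  have Gamma: "((\<lambda>t. t powr x / exp t) has_integral Gamma (x+1)) {0..}"
    using Gamma_integral_real[of "x+1"] assms by simp
  have "((\<lambda>t. exp (-1*t)) has_integral exp(-1*x)/1) {x..}"
    by (rule has_integral_exp_minus_to_infinity) simp
  hence "((\<lambda>t. x powr x * exp (-1*t)) has_integral x powr x * (exp (-1*x)/1)) {x..}"
    by (rule has_integral_mult_right)
  hence "((\<lambda>t. x powr x * exp (-t)) has_integral x powr x * exp (-x)) {x..}"
    by simp
  hence tail: "((\<lambda>t. if t \<in> {x..} then x powr x * exp (-t) else 0) has_integral x powr x * exp(-x)) {0..}"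
    using has_integral_restrict[of "{x..}" "{0..}" "\<lambda>t. x powr x * exp (-t)"] assms by simp
  show ?thesis
  proof (rule has_integral_le[OF tail Gamma])
    fix t :: real assume "t \<in> {0..}"
    show "(if t \<in> {x..} then x powr x * exp (-t) else 0) \<le> t powr x / exp t"
    proof (cases "t \<ge> x")
      case True
      have "x powr x \<le> t powr x" using True assms by (intro powr_mono2) auto
      thus ?thesis using True by (simp add: exp_minus field_simps)
    qed auto
  qed
qed

definition khintchine_const :: "real \<Rightarrow> real" where
  "khintchine_const q = q * 2 powr (q/2) * Gamma (q/2)"

lemma khintchine_const_pos: "q > 0 \<Longrightarrow> khintchine_const q > 0"
  by (simp add: khintchine_const_def)

lemma khintchine_const_lower:
  assumes q: "q > 0"
  shows "2 * q powr (q/2) * exp (-q/2) \<le> khintchine_const q"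
proof -
  have h: "q/2 > 0" using q by simp
  have "q/2 \<notin> \<int>\<^sub>\<le>\<^sub>0" using h by (auto elim!: nonpos_Ints_cases)
  hence "Gamma (q/2 + 1) = q/2 * Gamma (q/2)" by (rule Gamma_plus1)
  hence "(q/2) powr (q/2) * exp (-(q/2)) \<le> q/2 * Gamma (q/2)"
    using Gamma_lower_bound[OF h] by simp
  hence "2 * 2 powr (q/2) * ((q/2) powr (q/2) * exp (-(q/2))) \<le> 2 * 2 powr (q/2) * (q/2 * Gamma (q/2))"
    by (intro mult_left_mono) auto
  moreover have "2 powr (q/2) * (q/2) powr (q/2) = q powr (q/2)"
    using q by (simp add: powr_mult[symmetric])
  ultimately show ?thesis unfolding khintchine_const_def by (simp add: algebra_simps)
qed

lemma khintchine_const_ge_1: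
  assumes q: "q \<ge> 1" shows "khintchine_const q \<ge> 1"
proof -
  have q0: "q > 0" using q by simp
  have "-ln q \<le> 1/q - 1" using ln_le_minus_one[of "1/q"] q0 by (simp add: ln_div)
  hence "q * (-ln q) \<le> q * (1/q - 1)" using q0 by (intro mult_left_mono) auto
  hence "q * ln q - q \<ge> -1" using q0 by (simp add: algebra_simps)
  hence "exp (-1/2) \<le> exp ((q/2) * ln q + (-q/2))" by simp
  also have "\<dots> = q powr (q/2) * exp (-q/2)" using q0 by (simp add: powr_def mult_exp_exp algebra_simps)
  finally have lower: "exp (-1/2) \<le> q powr (q/2) * exp (-q/2)" .
  have "exp (1/2::real) \<le> 2" using exp_bound_half[of "1/2::real"] by simp
  hence "1 \<le> 2 * exp (-1/2::real)" by (simp add: exp_minus field_simps)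
  also have "\<dots> \<le> 2 * (q powr (q/2) * exp (-q/2))" using lower by simp
  also have "\<dots> \<le> khintchine_const q" using khintchine_const_lower[OF q0] by simp
  finally show ?thesis .
qed

text \<open>cosh mu \<le> exp(mu^2/2): the sub-Gaussian bound for a Rademacher variable, obtained from
  the auxiliary inequality in the proof of Hoeffding's lemma.\<close>
lemma cosh_le_exp_square:
  fixes \<mu> :: real
  shows "cosh \<mu> \<le> exp (\<mu>^2 / 2)"
proof -
  define h where "h = 2 * \<bar>\<mu>\<bar>"
  have aux: "-h * (1/2) + ln (1 + (1/2) * (exp h - 1)) \<le> h^2 / 8"
    using Hoeffdings_lemma_aux[of h "1/2"] by (simp add: h_def)
  have "1 + (1/2) * (exp h - 1) = (1 + exp h) / 2" by (simp add: field_simps)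
  hence "-h * (1/2) + ln ((1 + exp h) / 2) \<le> h^2 / 8" using aux by metis
  hence "ln ((1 + exp h) / 2) \<le> h/2 + h^2/8" by simp
  hence "(1 + exp h) / 2 \<le> exp (h/2 + h^2/8)"
    by (metis add_pos_pos divide_pos_pos exp_gt_zero exp_ln zero_less_one zero_less_numeral exp_le_cancel_iff)
  also have "\<dots> = exp (h/2) * exp (\<mu>^2/2)" by (simp add: h_def exp_add[symmetric] power2_eq_square)
  finally have *: "(1 + exp h) / 2 \<le> exp (h/2) * exp (\<mu>^2/2)" .
  have "cosh \<bar>\<mu>\<bar> = ((1 + exp h) / 2) / exp (h/2)"
    by (simp add: cosh_field_def h_def exp_minus field_simps exp_add[symmetric])
  also have "\<dots> \<le> exp (\<mu>^2/2)" using * by (simp add: divide_le_eq mult.commute)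
  finally show ?thesis by (cases "\<mu> \<ge> 0") auto
qed

text \<open>The exponential moment of a Rademacher sum over B factorizes over the coordinates.\<close>
lemma sign_sum_exp_moment:
  assumes B: "B \<subseteq> {..<m}"
  shows "(\<Sum>es\<in>sign_vectors m. exp (\<mu> * (\<Sum>j\<in>B. es j))) = 2^m * cosh \<mu> ^ card B"
proof -
  have fB: "finite B" using B finite_subset by blast
  define h where "h = (\<lambda>j (e::real). if j \<in> B then exp (\<mu> * e) else 1)"
  have "(\<Sum>es\<in>sign_vectors m. exp (\<mu> * (\<Sum>j\<in>B. es j))) = (\<Sum>es\<in>sign_vectors m. \<Prod>j<m. h j (es j))"
  proof (intro sum.cong refl)
    fix es
    have "exp (\<mu> * (\<Sum>j\<in>B. es j)) = (\<Prod>j\<in>{..<m} \<inter> B. exp (\<mu> * es j))"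
      using B by (simp add: sum_distrib_left exp_sum fB Int_absorb1)
    also have "\<dots> = (\<Prod>j<m. h j (es j))" unfolding h_def by (rule prod.inter_restrict) simp
    finally show "exp (\<mu> * (\<Sum>j\<in>B. es j)) = (\<Prod>j<m. h j (es j))" .
  qed
  also have "\<dots> = (\<Prod>j<m. \<Sum>e\<in>{-1,1}. h j e)"
    unfolding sign_vectors_def by (rule prod_sum_PiE[symmetric]) auto
  also have "\<dots> = (\<Prod>j<m. if j \<in> B then 2 * cosh \<mu> else 2)"
    by (intro prod.cong refl) (auto simp: h_def cosh_field_def)
  also have "\<dots> = (2 * cosh \<mu>) ^ card B * 2 ^ (m - card B)"
  proof -
    have "{..<m} \<inter> {x. x \<in> B} = B" using B by auto
    moreover have "{..<m} \<inter> - {x. x \<in> B} = {..<m} - B" by auto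
    ultimately show ?thesis using B fB by (simp add: prod.If_cases card_Diff_subset)
  qed
  also have "\<dots> = 2^m * cosh \<mu> ^ card B"
  proof -
    have "card B \<le> m" using B by (metis card_lessThan card_mono finite_lessThan)
    thus ?thesis by (simp add: power_mult_distrib power_add[symmetric])
  qed
  finally show ?thesis .
qed

lemma powr_le_exp:
  fixes u lam q :: real
  assumes u: "u \<ge> 0" and l: "lam > 0" and q: "q > 0"
  shows "u powr q \<le> (q / (exp 1 * lam)) powr q * exp (lam * u)"
proof (cases "u = 0")
  case False
  hence u: "u > 0" using u by simp
  define A where "A = lam * u / q"
  have "ln A \<le> A - 1" using u l q by (intro ln_le_minus_one) (simp add: A_def)
  moreover have "q * ln u = q * ln (q / (exp 1 * lam)) + q * (ln A + 1)"
    using u l q by (simp add: A_def ln_div ln_mult algebra_simps)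
  ultimately have "q * ln u \<le> q * ln (q / (exp 1 * lam)) + lam * u"
    using q by (simp add: A_def field_simps)
  hence "exp (q * ln u) \<le> exp (q * ln (q / (exp 1 * lam)) + lam * u)" by simp
  thus ?thesis using u l q by (simp add: powr_def exp_add)
qed (use l q in simp)

lemma rademacher_moment_chernoff:
  fixes q l :: real
  assumes B: "B \<subseteq> {..<m}" and q: "q > 0" and l: "l > 0"
  shows "(\<Sum>es\<in>sign_vectors m. \<bar>\<Sum>j\<in>B. es j\<bar> powr q) \<le>
         2 * 2^m * (q / (exp 1 * l)) powr q * exp (l^2/2) ^ card B"
proof -
  define K where "K = (q / (exp 1 * l)) powr q"
  have K: "K \<ge> 0" by (simp add: K_def)
  have pointwise: "\<bar>s\<bar> powr q \<le> K * (exp (l * s) + exp ((-l) * s))" for s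
  proof -
    have "\<bar>s\<bar> powr q \<le> K * exp (l * \<bar>s\<bar>)" unfolding K_def by (rule powr_le_exp[OF _ l q]) simp
    also have "exp (l * \<bar>s\<bar>) \<le> exp (l * s) + exp ((-l) * s)" by (cases "s \<ge> 0") auto
    hence "K * exp (l * \<bar>s\<bar>) \<le> K * (exp (l * s) + exp ((-l) * s))"
      using K by (rule mult_left_mono)
    finally show ?thesis .
  qed
  have "(\<Sum>es\<in>sign_vectors m. \<bar>\<Sum>j\<in>B. es j\<bar> powr q) \<le>
      (\<Sum>es\<in>sign_vectors m. K * (exp (l * (\<Sum>j\<in>B. es j)) + exp ((-l) * (\<Sum>j\<in>B. es j))))"
    by (intro sum_mono pointwise)
  also have "\<dots> = K * ((\<Sum>es\<in>sign_vectors m. exp (l * (\<Sum>j\<in>B. es j))) +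
      (\<Sum>es\<in>sign_vectors m. exp ((-l) * (\<Sum>j\<in>B. es j))))"
    by (simp only: sum.distrib[symmetric] sum_distrib_left)
  also have "\<dots> = 2 * 2^m * K * cosh l ^ card B"
    by (simp only: sign_sum_exp_moment[OF B] cosh_minus) simp
  also have "\<dots> \<le> 2 * 2^m * K * exp (l^2/2) ^ card B"
    using K by (intro mult_left_mono power_mono cosh_le_exp_square) auto
  finally show ?thesis by (simp add: K_def)
qed

text \<open>Moment bound for Rademacher sums: the average of |sum_(j in B) e_j|^q over all signs is
  at most C_q |B|^(q/2).  Take l = sqrt(q/|B|) in the Chernoff bound.\<close>
lemma rademacher_moment:
  fixes q :: real
  assumes B: "B \<subseteq> {..<m}" and q: "q > 0"
  shows "(\<Sum>es\<in>sign_vectors m. \<bar>\<Sum>j\<in>B. es j\<bar> powr q) \<le> 2^m * khintchine_const q * real (card B) powr (q/2)"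
proof (cases "card B = 0")
  case True
  hence "B = {}" using B finite_subset by fastforce
  thus ?thesis using q by simp
next
  case False
  define b where "b = real (card B)"
  have b: "b > 0" using False by (simp add: b_def)
  define l where "l = sqrt (q / b)"
  have l: "l > 0" using b q by (simp add: l_def)
  have "exp (l^2/2) ^ card B = exp (q/2)"
    using b q by (simp add: exp_of_nat_mult[symmetric] l_def b_def)
  moreover have "(q / (exp 1 * l)) powr q * exp (q/2) = q powr (q/2) * exp (-q/2) * b powr (q/2)"
  proof -
    have lnl: "ln l = (ln q - ln b) / 2" using b q by (simp add: l_def ln_sqrt ln_div)
    have "q * ln (q / (exp 1 * l)) + q/2 = q * (ln q - 1 - ln l) + q/2"
      using b q l by (simp add: ln_div ln_mult)
    also have "\<dots> = (q/2) * ln q + (-q/2) + (q/2) * ln b"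
      unfolding lnl by (simp add: field_simps)
    finally have "exp (q * ln (q / (exp 1 * l))) * exp (q/2) = exp ((q/2) * ln q) * exp (-q/2) * exp ((q/2) * ln b)"
      by (simp add: exp_add[symmetric])
    thus ?thesis using b q l by (simp add: powr_def)
  qed
  ultimately have "(\<Sum>es\<in>sign_vectors m. \<bar>\<Sum>j\<in>B. es j\<bar> powr q) \<le>
      2^m * (2 * q powr (q/2) * exp (-q/2)) * b powr (q/2)"
    using rademacher_moment_chernoff[OF B q l] by (simp add: mult_ac)
  also have "\<dots> \<le> 2^m * khintchine_const q * b powr (q/2)"
    using khintchine_const_lower[OF q] by (intro mult_right_mono mult_left_mono) auto
  finally show ?thesis by (simp add: b_def)
qed

section \<open>Power-mean inequalities\<close>

text \<open>Tangent-line bounds for t \<mapsto> t^r at a point M > 0, concave (0 \<le> r \<le> 1) and convex (r \<ge> 1)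
  case; both are instances of Young's inequality.\<close>
lemma powr_concave_tangent:
  fixes a M r :: real
  assumes a: "a \<ge> 0" and M: "M > 0" and r: "0 \<le> r" "r \<le> 1"
  shows "a powr r \<le> M powr r * (1 + r * (a / M - 1))"
proof (cases "a = 0")
  case False
  hence a': "a / M > 0" using a M by (simp add: field_simps)
  have "(a/M) powr r * 1 powr (1 - r) \<le> r * (a/M) + (1 - r) * 1"
    by (rule Youngs_inequality_0) (use r a' in auto)
  hence "M powr r * (a/M) powr r \<le> M powr r * (1 + r * (a / M - 1))"
    by (intro mult_left_mono) (auto simp: algebra_simps)
  moreover have "M powr r * (a/M) powr r = a powr r" using M a by (simp add: powr_mult[symmetric])
  ultimately show ?thesis by simp
qed (use M r in simp)

lemma powr_convex_tangent:
  fixes a M r :: real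
  assumes a: "a \<ge> 0" and M: "M > 0" and r: "r \<ge> 1"
  shows "M powr r * (1 + r * (a / M - 1)) \<le> a powr r"
proof (cases "a = 0")
  case True
  have "1 + r * (0 / M - 1) \<le> 0" using r by simp
  thus ?thesis using True M by (simp add: mult_nonneg_nonpos)
next
  case False
  hence a': "(a / M) powr r > 0" using a M by simp
  have "((a/M) powr r) powr (1/r) * 1 powr (1 - 1/r) \<le> (1/r) * ((a/M) powr r) + (1 - 1/r) * 1"
    by (rule Youngs_inequality_0) (use r a' in auto)
  moreover have "((a/M) powr r) powr (1/r) = a / M" using r a M by (simp add: powr_powr)
  ultimately have "r * (a / M) \<le> r * ((1/r) * ((a/M) powr r) + (1 - 1/r))"
    using r by (intro mult_left_mono) auto
  also have "\<dots> = (a/M) powr r + r - 1" using r by (simp add: field_simps)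
  finally have "1 + r * (a / M - 1) \<le> (a/M) powr r" by (simp add: algebra_simps)
  hence "M powr r * (1 + r * (a / M - 1)) \<le> M powr r * (a/M) powr r" by (intro mult_left_mono) auto
  moreover have "M powr r * (a/M) powr r = a powr r" using M a by (simp add: powr_mult[symmetric])
  ultimately show ?thesis by simp
qed

lemma sum_powr_concave:
  fixes F :: "'e \<Rightarrow> real"
  assumes E: "finite E" and F: "\<forall>e\<in>E. F e \<ge> 0" and S: "(\<Sum>e\<in>E. F e) \<le> real (card E) * B"
    and B: "B > 0" and r: "0 \<le> r" "r \<le> 1"
  shows "(\<Sum>e\<in>E. F e powr r) \<le> real (card E) * B powr r"
proof -
  have "(\<Sum>e\<in>E. F e powr r) \<le> (\<Sum>e\<in>E. B powr r * (1 + r * (F e / B - 1)))"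
    using F B r by (intro sum_mono powr_concave_tangent) auto
  also have "\<dots> = B powr r * (real (card E) + r * ((\<Sum>e\<in>E. F e) / B - real (card E)))"
    by (simp add: sum_distrib_left sum.distrib sum_subtractf sum_divide_distrib[symmetric] algebra_simps)
  also have "\<dots> \<le> B powr r * real (card E)"
  proof -
    have "(\<Sum>e\<in>E. F e) / B \<le> real (card E)" using S B by (simp add: divide_le_eq mult.commute)
    hence "r * ((\<Sum>e\<in>E. F e) / B - real (card E)) \<le> 0" using r by (simp add: mult_nonneg_nonpos)
    thus ?thesis by (intro mult_left_mono) auto
  qed
  finally show ?thesis by (simp add: mult.commute)
qed

lemma sum_powr_convex:
  fixes F :: "'i \<Rightarrow> real"
  assumes I: "finite I" "card I > 0" and F: "\<forall>i\<in>I. F i \<ge> 0" and r: "r \<ge> 1"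
  shows "(\<Sum>i\<in>I. F i) powr r \<le> real (card I) powr (r - 1) * (\<Sum>i\<in>I. F i powr r)"
proof -
  define n where "n = real (card I)"
  have n: "n > 0" using I by (simp add: n_def)
  define M where "M = (\<Sum>i\<in>I. F i) / n"
  have M0: "M \<ge> 0" using F n by (simp add: M_def sum_nonneg)
  show ?thesis
  proof (cases "M = 0")
    case True
    hence "(\<Sum>i\<in>I. F i) = 0" using n by (simp add: M_def)
    thus ?thesis using F by (simp add: sum_nonneg)
  next
    case False
    hence M: "M > 0" using M0 by simp
    have "(\<Sum>i\<in>I. M powr r * (1 + r * (F i / M - 1))) = M powr r * (n + r * ((\<Sum>i\<in>I. F i) / M - n))"
      by (simp add: sum_distrib_left sum.distrib sum_subtractf sum_divide_distrib[symmetric] algebra_simps n_def)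
    also have "(\<Sum>i\<in>I. F i) / M = n" using M n by (auto simp: M_def)
    finally have "M powr r * n = (\<Sum>i\<in>I. M powr r * (1 + r * (F i / M - 1)))" by simp
    also have "\<dots> \<le> (\<Sum>i\<in>I. F i powr r)"
      using F M r by (intro sum_mono powr_convex_tangent) auto
    finally have le: "M powr r * n \<le> (\<Sum>i\<in>I. F i powr r)" .
    have "(\<Sum>i\<in>I. F i) powr r = (n * M) powr r" using n by (simp add: M_def)
    also have "\<dots> = n powr (r - 1) * (n * M powr r)"
      using n M by (simp add: powr_mult powr_diff)
    also have "\<dots> \<le> n powr (r - 1) * (\<Sum>i\<in>I. F i powr r)"
      using le by (intro mult_left_mono) (auto simp: mult.commute)
    finally show ?thesis by (simp add: n_def)
  qed
qed

lemma sum_powr_le_powr_sum: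
  fixes k :: "nat \<Rightarrow> real"
  assumes k: "\<forall>i\<in>I. k i \<ge> 0" and s: "s \<ge> 1" and I: "finite I"
  shows "(\<Sum>i\<in>I. k i powr s) \<le> (\<Sum>i\<in>I. k i) powr s"
proof -
  define S where "S = (\<Sum>i\<in>I. k i)"
  have S0: "S \<ge> 0" using k by (simp add: S_def sum_nonneg)
  have "k i powr s \<le> k i * S powr (s - 1)" if i: "i \<in> I" for i
  proof (cases "k i = 0")
    case False
    hence ki: "k i > 0" using k i by force
    have kS: "k i \<le> S" unfolding S_def using k i I by (intro member_le_sum) auto
    have "k i powr s = k i * k i powr (s - 1)" using ki by (simp add: powr_diff field_simps)
    also have "\<dots> \<le> k i * S powr (s - 1)" using kS ki s by (intro mult_left_mono powr_mono2) auto
    finally show ?thesis .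
  qed (use s in simp)
  hence "(\<Sum>i\<in>I. k i powr s) \<le> (\<Sum>i\<in>I. k i * S powr (s - 1))" by (intro sum_mono)
  also have "\<dots> = S * S powr (s - 1)" by (simp add: S_def sum_distrib_right)
  also have "\<dots> = S powr s"
    using S0 by (cases "S = 0") (auto simp: powr_diff field_simps)
  finally show ?thesis by (simp add: S_def)
qed

text \<open>If the block sizes k_i sum to m then sum_i k_i^s \<le> m^s (superadditivity for s \<ge> 1; for
  m \<le> 1 every k_i is 0 or 1).\<close>
lemma sum_block_sizes_powr:
  fixes k :: "nat \<Rightarrow> nat"
  assumes ks: "(\<Sum>i<n. k i) = m" and s: "s > 0" and sm: "s \<ge> 1 \<or> m \<le> 1"
  shows "(\<Sum>i<n. real (k i) powr s) \<le> real m powr s"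
proof (cases "s \<ge> 1")
  case True
  have "(\<Sum>i<n. real (k i) powr s) \<le> (\<Sum>i<n. real (k i)) powr s"
    by (rule sum_powr_le_powr_sum) (use True in auto)
  thus ?thesis using ks by (simp flip: of_nat_sum)
next
  case False
  hence m1: "m \<le> 1" using sm by simp
  have "(\<Sum>i<n. real (k i) powr s) = (\<Sum>i<n. real (k i))"
  proof (intro sum.cong refl)
    fix i assume "i \<in> {..<n}"
    hence "k i = 0 \<or> k i = 1" using member_le_sum[of i "{..<n}" k] ks m1 by fastforce
    thus "real (k i) powr s = real (k i)" by auto
  qed
  also have "\<dots> = real m" using ks by (simp flip: of_nat_sum)
  also have "\<dots> \<le> real m powr s" using m1 by (cases "m = 0") (auto simp: le_Suc_eq)
  finally show ?thesis .
qed

lemma blocks_moment: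
  fixes k :: "nat \<Rightarrow> nat"
  assumes Bk: "\<forall>i<n. Bk i \<subseteq> {..<m} \<and> card (Bk i) = k i" and ks: "(\<Sum>i<n. k i) = m"
    and q: "q > 0" and sm: "q/2 \<ge> 1 \<or> m \<le> 1"
  shows "(\<Sum>es\<in>sign_vectors m. \<Sum>i<n. \<bar>\<Sum>j\<in>Bk i. es j\<bar> powr q) \<le> 2^m * (khintchine_const q * real m powr (q/2))"
proof -
  have "(\<Sum>es\<in>sign_vectors m. \<Sum>i<n. \<bar>\<Sum>j\<in>Bk i. es j\<bar> powr q) =
      (\<Sum>i<n. \<Sum>es\<in>sign_vectors m. \<bar>\<Sum>j\<in>Bk i. es j\<bar> powr q)"
    by (rule sum.swap)
  also have "\<dots> \<le> (\<Sum>i<n. 2^m * khintchine_const q * real (k i) powr (q/2))"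
  proof (intro sum_mono)
    fix i assume "i \<in> {..<n}"
    thus "(\<Sum>es\<in>sign_vectors m. \<bar>\<Sum>j\<in>Bk i. es j\<bar> powr q) \<le> 2^m * khintchine_const q * real (k i) powr (q/2)"
      using rademacher_moment[of "Bk i" m q] Bk q by auto
  qed
  also have "\<dots> = 2^m * khintchine_const q * (\<Sum>i<n. real (k i) powr (q/2))"
    by (simp add: sum_distrib_left)
  also have "\<dots> \<le> 2^m * khintchine_const q * real m powr (q/2)"
    using sum_block_sizes_powr[OF ks _ sm] q khintchine_const_pos[OF q]
    by (intro mult_left_mono) auto
  finally show ?thesis by (simp add: mult.assoc)
qed

text \<open>The quantity bounding the sign average of (sum_i |S_i(e)|^q)^(m/q) in the two regimes.\<close>
definition sign_moment_bound :: "real \<Rightarrow> nat \<Rightarrow> nat \<Rightarrow> real" where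
  "sign_moment_bound q m n = (if q \<ge> real m then khintchine_const q * real m powr (q/2)
      else real n powr ((real m - q) / q) * khintchine_const (real m) * real m powr (real m / 2))"

text \<open>For q \<ge> m the exponent m/q \<le> 1, so Jensen for the concave power applies.\<close>
lemma blocks_moment_large_exponent:
  fixes k :: "nat \<Rightarrow> nat"
  assumes Bk: "\<forall>i<n. Bk i \<subseteq> {..<m} \<and> card (Bk i) = k i" and ks: "(\<Sum>i<n. k i) = m"
    and q: "q \<ge> 1" "q \<ge> real m" and m: "m \<ge> 1"
  shows "(\<Sum>es\<in>sign_vectors m. (\<Sum>i<n. \<bar>\<Sum>j\<in>Bk i. es j\<bar> powr q) powr (real m / q))
     \<le> 2^m * (khintchine_const q * real m powr (q/2))"
proof -
  have q0: "q > 0" using q by simp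
  define C where "C = khintchine_const q * real m powr (q/2)"
  have C: "C \<ge> 1"
  proof -
    have "real m powr (q/2) \<ge> 1" using m q0 by (simp add: ge_one_powr_ge_zero)
    thus ?thesis using khintchine_const_ge_1[OF q(1)] mult_mono[of 1 _ 1] by (force simp: C_def)
  qed
  have "(\<Sum>es\<in>sign_vectors m. (\<Sum>i<n. \<bar>\<Sum>j\<in>Bk i. es j\<bar> powr q) powr (real m / q))
      \<le> real (card (sign_vectors m)) * C powr (real m / q)"
  proof (rule sum_powr_concave[OF finite_sign_vectors])
    show "(\<Sum>es\<in>sign_vectors m. \<Sum>i<n. \<bar>\<Sum>j\<in>Bk i. es j\<bar> powr q) \<le> real (card (sign_vectors m)) * C"
      using blocks_moment[OF Bk ks q0] q by (simp add: card_sign_vectors C_def) linarith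
  qed (use C q0 q in \<open>auto simp: sum_nonneg divide_le_eq\<close>)
  also have "C powr (real m / q) \<le> C powr 1"
    using C q0 q by (intro powr_mono) (auto simp: divide_le_eq)
  finally show ?thesis using C by (simp add: card_sign_vectors C_def)
qed

text \<open>For q < m the power-mean inequality passes to the m-th moments, at the cost n^((m-q)/q).\<close>
lemma blocks_moment_small_exponent:
  fixes k :: "nat \<Rightarrow> nat"
  assumes Bk: "\<forall>i<n. Bk i \<subseteq> {..<m} \<and> card (Bk i) = k i" and ks: "(\<Sum>i<n. k i) = m"
    and q: "q \<ge> 1" "q < real m" and n: "n \<ge> 1"
  shows "(\<Sum>es\<in>sign_vectors m. (\<Sum>i<n. \<bar>\<Sum>j\<in>Bk i. es j\<bar> powr q) powr (real m / q))
     \<le> 2^m * (real n powr ((real m - q) / q) * khintchine_const (real m) * real m powr (real m / 2))"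
proof -
  have q0: "q > 0" using q by simp
  have "m \<ge> 2" using q by linarith
  hence m2: "real m / 2 \<ge> 1" by simp
  have r: "real m / q \<ge> 1" using q q0 by (simp add: field_simps)
  have r1: "real m / q - 1 = (real m - q) / q" using q0 by (simp add: field_simps)
  have "(\<Sum>i<n. \<bar>\<Sum>j\<in>Bk i. es j\<bar> powr q) powr (real m / q)
      \<le> real n powr ((real m - q) / q) * (\<Sum>i<n. \<bar>\<Sum>j\<in>Bk i. es j\<bar> powr real m)" for es
  proof -
    have "(\<Sum>i<n. \<bar>\<Sum>j\<in>Bk i. es j\<bar> powr q) powr (real m / q)
        \<le> real (card {..<n}) powr (real m / q - 1) * (\<Sum>i<n. (\<bar>\<Sum>j\<in>Bk i. es j\<bar> powr q) powr (real m / q))"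
      by (rule sum_powr_convex) (use n r in auto)
    thus ?thesis using q0 by (simp add: powr_powr r1)
  qed
  hence "(\<Sum>es\<in>sign_vectors m. (\<Sum>i<n. \<bar>\<Sum>j\<in>Bk i. es j\<bar> powr q) powr (real m / q))
      \<le> real n powr ((real m - q) / q) * (\<Sum>es\<in>sign_vectors m. \<Sum>i<n. \<bar>\<Sum>j\<in>Bk i. es j\<bar> powr real m)"
    by (simp add: sum_distrib_left sum_mono)
  also have "\<dots> \<le> real n powr ((real m - q) / q) * (2^m * (khintchine_const (real m) * real m powr (real m / 2)))"
    using blocks_moment[OF Bk ks, of "real m"] m2 q by (intro mult_left_mono) auto
  finally show ?thesis by (simp add: mult_ac)
qed

lemma blocks_moment_bound:
  fixes k :: "nat \<Rightarrow> nat"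
  assumes Bk: "\<forall>i<n. Bk i \<subseteq> {..<m} \<and> card (Bk i) = k i" and ks: "(\<Sum>i<n. k i) = m"
    and q: "q \<ge> 1" and m: "m \<ge> 1"
  shows "(\<Sum>es\<in>sign_vectors m. (\<Sum>i<n. \<bar>\<Sum>j\<in>Bk i. es j\<bar> powr q) powr (real m / q))
     \<le> 2^m * sign_moment_bound q m n"
proof (cases "q \<ge> real m")
  case True
  thus ?thesis using blocks_moment_large_exponent[OF Bk ks q True m] by (simp add: sign_moment_bound_def)
next
  case False
  have "n \<ge> 1" using ks m by (cases n) auto
  thus ?thesis using blocks_moment_small_exponent[OF Bk ks q _ \<open>n \<ge> 1\<close>] False
    by (simp add: sign_moment_bound_def)
qed

lemma block_polarization_bound:
  fixes x :: "nat \<Rightarrow> nat \<Rightarrow> real" and k :: "nat \<Rightarrow> nat" and g :: "nat \<Rightarrow> real"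
  assumes p: "1 \<le> p" and m: "m \<ge> 1" and lin: "multilinear_lp p m L" and sym: "symmetric_lp p m L"
    and cont: "continuous_lp p m L" and x: "\<forall>i<n. in_lp p (x i)" and ks: "(\<Sum>i<n. k i) = m"
  shows "2^m * fact m * \<bar>\<Prod>i<n. g i ^ k i\<bar> * \<bar>L (power_tuple n x k)\<bar> \<le>
    poly_norm p m L * (\<Sum>es\<in>sign_vectors m.
      lp_norm p (\<lambda>t. \<Sum>i<n. (g i * (\<Sum>j\<in>positions (block_list n k) i. es j)) * x i t) ^ m)"
  using polarization_bound[OF lin sym cont p m _ set_block_list x, of k g] ks
  by (simp add: power_tuple_block_list prod_block_list length_block_list)

text \<open>First estimate: weights g_i = 1/k_i make every coefficient lie in [-1,1].\<close>
lemma product_estimate: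
  fixes x :: "nat \<Rightarrow> nat \<Rightarrow> real" and k :: "nat \<Rightarrow> nat"
  assumes p: "1 \<le> p" and m: "m \<ge> 1" and lin: "multilinear_lp p m L" and sym: "symmetric_lp p m L"
    and cont: "continuous_lp p m L" and x: "\<forall>i<n. in_lp p (x i) \<and> lp_norm p (x i) = 1"
    and disj: "\<forall>i<n. \<forall>j<n. i \<noteq> j \<longrightarrow> supp (x i) \<inter> supp (x j) = {}" and ks: "(\<Sum>i<n. k i) = m"
  shows "\<bar>L (power_tuple n x k)\<bar> \<le> poly_norm p m L *
    (real (\<Prod>i<n. k i ^ k i) / fact m * (if p = \<infinity> then 1 else real n powr (real m / real_of_ereal p)))"
proof -
  define P where "P = (\<Prod>i<n. real (k i) ^ k i)"
  define F where "F = (if p = \<infinity> then 1 else real n powr (real m / real_of_ereal p))"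
  define g where "g i = 1 / real (k i)" for i
  have P: "P > 0" unfolding P_def by (intro prod_pos) (auto simp: power_0_left)
  have coeff: "\<bar>g i * (\<Sum>j\<in>positions (block_list n k) i. es j)\<bar> \<le> 1"
    if es: "es \<in> sign_vectors m" and i: "i < n" for es i
  proof -
    have "\<bar>\<Sum>j\<in>positions (block_list n k) i. es j\<bar> \<le> (\<Sum>j\<in>positions (block_list n k) i. \<bar>es j\<bar>)"
      by (rule sum_abs)
    also have "\<dots> = real (k i)"
      using abs_sign[OF es] positions_block_list[of n k] i ks by (simp add: subset_eq)
    finally show ?thesis by (cases "k i = 0") (simp_all add: g_def abs_mult divide_le_eq)
  qed
  have "2^m * fact m * (1 / P) * \<bar>L (power_tuple n x k)\<bar> \<le>
      poly_norm p m L * (\<Sum>es\<in>sign_vectors m.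
        lp_norm p (\<lambda>t. \<Sum>i<n. (g i * (\<Sum>j\<in>positions (block_list n k) i. es j)) * x i t) ^ m)"
    using block_polarization_bound[OF p m lin sym cont _ ks, of x g] x P
    by (simp add: g_def P_def power_one_over prod_dividef)
  also have "\<dots> \<le> poly_norm p m L * (\<Sum>es\<in>sign_vectors m. F)"
    using lp_norm_disjoint_unit_coeffs[OF p x disj m] coeff poly_norm_nonneg[OF lin cont p m]
    by (intro mult_left_mono sum_mono) (auto simp: F_def)
  finally have "2^m * (fact m * (1 / P) * \<bar>L (power_tuple n x k)\<bar>) \<le> 2^m * (poly_norm p m L * F)"
    by (simp add: card_sign_vectors mult_ac)
  hence "fact m * (1 / P) * \<bar>L (power_tuple n x k)\<bar> \<le> poly_norm p m L * F"
    by (rule mult_left_le_imp_le) simp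
  thus ?thesis using P by (simp add: P_def F_def field_simps)
qed

text \<open>Second estimate (p finite): weights g_i = 1 and the moment bounds for Rademacher sums.\<close>
lemma khintchine_estimate:
  fixes x :: "nat \<Rightarrow> nat \<Rightarrow> real" and k :: "nat \<Rightarrow> nat"
  assumes p: "1 \<le> p" and m: "m \<ge> 1" and lin: "multilinear_lp p m L" and sym: "symmetric_lp p m L"
    and cont: "continuous_lp p m L" and x: "\<forall>i<n. in_lp p (x i) \<and> lp_norm p (x i) = 1"
    and disj: "\<forall>i<n. \<forall>j<n. i \<noteq> j \<longrightarrow> supp (x i) \<inter> supp (x j) = {}" and ks: "(\<Sum>i<n. k i) = m"
    and fin: "p \<noteq> \<infinity>"
  shows "\<bar>L (power_tuple n x k)\<bar> \<le> poly_norm p m L * (sign_moment_bound (real_of_ereal p) m n / fact m)"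
proof -
  define q where "q = real_of_ereal p"
  have q: "q \<ge> 1" using finite_exponent_ge_1[OF p fin] by (simp add: q_def)
  have "2^m * fact m * \<bar>L (power_tuple n x k)\<bar> \<le>
      poly_norm p m L * (\<Sum>es\<in>sign_vectors m.
        lp_norm p (\<lambda>t. \<Sum>i<n. (1 * (\<Sum>j\<in>positions (block_list n k) i. es j)) * x i t) ^ m)"
    using block_polarization_bound[OF p m lin sym cont _ ks, of x "\<lambda>_. 1"] x by simp
  also have "\<dots> = poly_norm p m L * (\<Sum>es\<in>sign_vectors m.
      (\<Sum>i<n. \<bar>\<Sum>j\<in>positions (block_list n k) i. es j\<bar> powr q) powr (real m / q))"
    by (simp add: lp_norm_disjoint_pow[OF p fin x disj m] q_def)
  also have "\<dots> \<le> poly_norm p m L * (2^m * sign_moment_bound q m n)"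
    using blocks_moment_bound[OF _ ks q m] positions_block_list[of n k] ks poly_norm_nonneg[OF lin cont p m]
    by (intro mult_left_mono) auto
  finally have "2^m * (fact m * \<bar>L (power_tuple n x k)\<bar>) \<le> 2^m * (poly_norm p m L * sign_moment_bound q m n)"
    by (simp add: mult_ac)
  hence "fact m * \<bar>L (power_tuple n x k)\<bar> \<le> poly_norm p m L * sign_moment_bound q m n" by simp
  thus ?thesis by (simp add: q_def field_simps)
qed

lemma thm5_bound_eq:
  "thm5_bound p m n k =
    (let first = real (\<Prod>i<n. k i ^ k i) / fact m *
                 (if p = \<infinity> then 1 else real n powr (real m / real_of_ereal p))
     in if p = \<infinity> then first else min first (sign_moment_bound (real_of_ereal p) m n / fact m))"
  by (simp add: thm5_bound_def sign_moment_bound_def khintchine_const_def Let_def mult_ac)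

lemma thm5_bound_nonneg:
  assumes "1 \<le> p" "m \<ge> 1"
  shows "0 \<le> thm5_bound p m n k"
proof -
  have "0 \<le> sign_moment_bound (real_of_ereal p) m n" if "p \<noteq> \<infinity>"
    using finite_exponent_ge_1[OF assms(1) that] assms(2)
    by (auto simp: sign_moment_bound_def intro!: mult_nonneg_nonneg less_imp_le[OF khintchine_const_pos])
  moreover have "0 \<le> real (\<Prod>i<n. k i ^ k i) / fact m *
                 (if p = \<infinity> then 1 else real n powr (real m / real_of_ereal p))"
    by (simp add: prod_nonneg)
  ultimately show ?thesis unfolding thm5_bound_eq Let_def by (cases "p = \<infinity>") auto
qed

theorem mainTheorem5:
  fixes p :: ereal and m n :: nat and L :: "(nat \<Rightarrow> real) list \<Rightarrow> real"
    and x :: "nat \<Rightarrow> nat \<Rightarrow> real" and k :: "nat \<Rightarrow> nat"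
  assumes "1 \<le> p" and "m \<ge> 1"
    and "multilinear_lp p m L" and "symmetric_lp p m L" and "continuous_lp p m L"
    and "\<forall>i<n. in_lp p (x i) \<and> lp_norm p (x i) = 1"
    and "\<forall>i<n. \<forall>j<n. i \<noteq> j \<longrightarrow> supp (x i) \<inter> supp (x j) = {}"
    and "(\<Sum>i<n. k i) = m"
  shows "\<bar>L (power_tuple n x k)\<bar> / poly_norm p m L \<le> thm5_bound p m n k"
proof -
  have N: "0 \<le> poly_norm p m L" using poly_norm_nonneg assms(1-3,5) by blast
  have "\<bar>L (power_tuple n x k)\<bar> \<le> poly_norm p m L * thm5_bound p m n k"
  proof (cases "p = \<infinity>")
    case True
    thus ?thesis using product_estimate[OF assms] by (simp add: thm5_bound_eq)
  next
    case False
    thus ?thesis using product_estimate[OF assms] khintchine_estimate[OF assms False]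
      unfolding thm5_bound_eq Let_def by (simp add: min_def)
  qed
  moreover have "0 \<le> thm5_bound p m n k" using thm5_bound_nonneg assms(1,2) by blast
  ultimately show ?thesis using N
    by (cases "poly_norm p m L = 0") (auto simp: divide_le_eq mult.commute)
qed

end
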